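(* Let $\kappa$ be an infinite cardinal and let $(F_\xi)_{\xi\in\kappa}$ be a family of nonempty finite sets such that every element $x$ belongs to $F_\xi$ for fewer than $\kappa$ values of $\xi$. Then there exist a set $D\subseteq\kappa$ with $|D|=\kappa$ and a choice of elements $x_\xi\in F_\xi$ for $\xi\in D$ such that, whenever $\alpha,\beta\in D$ and $x_\alpha\in F_\beta$, we have $x_\alpha=x_\beta$. *)

theory Defs
  imports "HOL-Library.Equipollence"
begin

end

theory Submission
  imports
    Defs
    "HOL-Library.Disjoint_Sets"
    "HOL-Algebra.Free_Abelian_Groups" (* for eqpoll_Fpow and the cardinal arithmetic of HOL-Cardinals *)
begin

(* If a maximal subfamily of pairwise disjoint sets F \<xi> has \<kappa> members, any choice works.
   Otherwise its union B has fewer than \<kappa> points and, by maximality, every F \<xi> meets B, so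
   the traces F \<xi> \<inter> B are finite and take fewer than \<kappa> values. Choosing x \<xi> in the trace,
   uniformly for equal traces, reduces the theorem to finding pairwise disjoint traces whose
   preimages together have \<kappa> elements.
   Call a disjoint family of traces absorbing if the shadow of each member (the set of indices
   whose trace meets it) is no larger than the preimage of the whole family. Absorbing families
   are closed under unions of chains, and a maximal one has a preimage of size \<kappa>: otherwise
   the shadow of its union is small, and an \<omega>-sequence of fresh traces, each with a preimage
   larger than the shadow of everything chosen before, would extend it. *)

lemma lepoll_iff_card_of_ordLeq: "A \<lesssim> B \<longleftrightarrow> |A| \<le>o |B|"
  by (simp add: lepoll_def card_of_ordLeq[symmetric])

lemma not_lepoll_iff_lesspoll: "\<not> A \<lesssim> B \<longleftrightarrow> B \<prec> A"
  by (meson card_of_Well_order eqpoll_imp_lepoll eqpoll_sym lepoll_antisym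
      lepoll_iff_card_of_ordLeq lesspoll_def not_ordLeq_iff_ordLess ordLess_imp_ordLeq)

lemma lesspoll_iff_card_of_ordLess: "A \<prec> B \<longleftrightarrow> |A| <o |B|"
  by (simp add: not_lepoll_iff_lesspoll[symmetric] lepoll_iff_card_of_ordLeq
      not_ordLeq_iff_ordLess card_of_Well_order)

lemma Un_lesspoll_infinite: "infinite C \<Longrightarrow> A \<prec> C \<Longrightarrow> B \<prec> C \<Longrightarrow> A \<union> B \<prec> C"
  by (simp add: lesspoll_iff_card_of_ordLess card_of_Un_ordLess_infinite)

lemma Times_lesspoll_infinite: "infinite C \<Longrightarrow> A \<prec> C \<Longrightarrow> B \<prec> C \<Longrightarrow> A \<times> B \<prec> C"
  by (simp add: lesspoll_iff_card_of_ordLess card_of_Times_ordLess_infinite)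

lemma finite_UN_lesspoll_infinite:
  assumes "infinite C" "finite I" "\<And>i. i \<in> I \<Longrightarrow> A i \<prec> C"
  shows "(\<Union>i\<in>I. A i) \<prec> C"
  using assms(2,3)
proof (induction I rule: finite_induct)
  case empty
  then show ?case using assms(1) finite_lesspoll_infinite by auto
next
  case (insert i I)
  then show ?case by (simp add: Un_lesspoll_infinite[OF assms(1)])
qed

lemma UN_lepoll_Times: "(\<And>i. i \<in> I \<Longrightarrow> A i \<lesssim> B) \<Longrightarrow> (\<Union>i\<in>I. A i) \<lesssim> I \<times> B"
proof -
  assume "\<And>i. i \<in> I \<Longrightarrow> A i \<lesssim> B"
  then have "Sigma I A \<lesssim> Sigma I (\<lambda>_. B)" by (intro Sigma_lepoll_mono) auto
  moreover have "(\<Union>i\<in>I. A i) \<lesssim> Sigma I A"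
    using card_of_UNION_Sigma lepoll_iff_card_of_ordLeq by blast
  ultimately show ?thesis using lepoll_trans by blast
qed

lemma UN_finite_lesspoll_infinite:
  assumes "infinite C" "I \<prec> C" "\<And>i. i \<in> I \<Longrightarrow> finite (A i)"
  shows "(\<Union>i\<in>I. A i) \<prec> C"
proof (cases "finite I")
  case True
  then have "finite (\<Union>i\<in>I. A i)" using assms(3) by blast
  then show ?thesis using assms(1) finite_lesspoll_infinite by blast
next
  case False
  have "|\<Union>i\<in>I. A i| \<le>o |I|"
    using False assms(3) finite_lepoll_infinite
    by (intro card_of_UNION_ordLeq_infinite) (auto simp: lepoll_iff_card_of_ordLeq[symmetric])
  then have "(\<Union>i\<in>I. A i) \<lesssim> I" by (simp add: lepoll_iff_card_of_ordLeq)
  then show ?thesis using assms(2) by (rule lesspoll_trans1)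
qed

lemma Fpow_lesspoll_infinite:
  assumes "infinite C" "A \<prec> C" shows "Fpow A \<prec> C"
proof (cases "finite A")
  case True
  then have "finite (Fpow A)" by (simp add: Fpow_def)
  then show ?thesis using assms(1) finite_lesspoll_infinite by blast
next
  case False
  then show ?thesis using assms(2) eq_lesspoll_trans eqpoll_Fpow by blast
qed

lemma exists_maximal_pairwise_subset:
  "\<exists>D\<subseteq>A. pairwise R D \<and> (\<forall>x\<in>A - D. \<not> pairwise R (insert x D))"
proof -
  let ?P = "{D. D \<subseteq> A \<and> pairwise R D}"
  have "\<exists>D\<in>?P. \<forall>X\<in>?P. D \<subseteq> X \<longrightarrow> X = D"
  proof (rule subset_Zorn')
    fix C assume C: "subset.chain ?P C"
    then have "chain\<^sub>\<subseteq> C" by (simp add: chain_subset_def subset_chain_def)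
    then have "pairwise R (\<Union>C)"
      using C by (intro pairwise_chain_Union) (auto simp: subset_chain_def)
    moreover have "\<Union>C \<subseteq> A" using C by (auto simp: subset_chain_def)
    ultimately show "\<Union>C \<in> ?P" by simp
  qed
  then obtain D where D: "D \<subseteq> A" "pairwise R D"
    and maximal: "\<And>X. X \<subseteq> A \<Longrightarrow> pairwise R X \<Longrightarrow> D \<subseteq> X \<Longrightarrow> X = D"
    by auto
  have "\<not> pairwise R (insert x D)" if "x \<in> A - D" for x
  proof
    assume "pairwise R (insert x D)"
    then have "insert x D = D" using that D(1) by (intro maximal) auto
    with that show False by auto
  qed
  with D show ?thesis by auto
qed

lemma consistent_choice_from_disjoint_traces:
  assumes "disjoint ((\<lambda>\<xi>. F \<xi> \<inter> B) ` D)" and "\<And>\<xi>. \<xi> \<in> D \<Longrightarrow> F \<xi> \<inter> B \<noteq> {}"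
  shows "\<exists>x. (\<forall>\<xi>\<in>D. x \<xi> \<in> F \<xi>) \<and> (\<forall>\<alpha>\<in>D. \<forall>\<beta>\<in>D. x \<alpha> \<in> F \<beta> \<longrightarrow> x \<alpha> = x \<beta>)"
proof -
  define x where "x \<xi> = (SOME y. y \<in> F \<xi> \<inter> B)" for \<xi>
  have x: "x \<xi> \<in> F \<xi> \<inter> B" if \<xi>: "\<xi> \<in> D" for \<xi>
  proof -
    obtain y where "y \<in> F \<xi> \<inter> B" using assms(2)[OF \<xi>] by blast
    then show ?thesis unfolding x_def by (rule someI)
  qed
  have x_eq: "x \<alpha> = x \<beta>" if "\<alpha> \<in> D" "\<beta> \<in> D" "x \<alpha> \<in> F \<beta>" for \<alpha> \<beta>
  proof -
    have common: "x \<alpha> \<in> (F \<alpha> \<inter> B) \<inter> (F \<beta> \<inter> B)" using x[OF that(1)] that(3) by blast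
    have "F \<alpha> \<inter> B = F \<beta> \<inter> B"
    proof (rule ccontr)
      assume "F \<alpha> \<inter> B \<noteq> F \<beta> \<inter> B"
      then have "(F \<alpha> \<inter> B) \<inter> (F \<beta> \<inter> B) = {}"
        using that(1,2) by (intro disjointD[OF assms(1)]) auto
      with common show False by blast
    qed
    then show ?thesis by (simp add: x_def)
  qed
  show ?thesis
  proof (intro exI[of _ x] conjI ballI impI)
    show "x \<xi> \<in> F \<xi>" if "\<xi> \<in> D" for \<xi> using x[OF that] by blast
  qed (fact x_eq)
qed

locale few_finite_values =
  fixes K :: "'i set" and g :: "'i \<Rightarrow> 'a set"
  assumes infinite_index: "infinite K"
    and finite_values: "\<And>\<xi>. \<xi> \<in> K \<Longrightarrow> finite (g \<xi>)"
    and nonempty_values: "\<And>\<xi>. \<xi> \<in> K \<Longrightarrow> g \<xi> \<noteq> {}"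
    and few_values: "g ` K \<prec> K"
    and point_preimages_small: "\<And>x. {\<xi> \<in> K. x \<in> g \<xi>} \<prec> K"
begin

definition shadow :: "'a set \<Rightarrow> 'i set"
  where "shadow A = {\<xi> \<in> K. g \<xi> \<inter> A \<noteq> {}}"

definition preimage :: "'a set set \<Rightarrow> 'i set"
  where "preimage I = {\<xi> \<in> K. g \<xi> \<in> I}"

definition absorbing :: "'a set set \<Rightarrow> bool"
  where "absorbing I \<longleftrightarrow> I \<subseteq> g ` K \<and> disjoint I \<and> (\<forall>G\<in>I. shadow G \<lesssim> preimage I)"

lemma shadow_Un: "shadow (A \<union> B) = shadow A \<union> shadow B"
  by (auto simp: shadow_def)

lemma preimage_mono: "I \<subseteq> J \<Longrightarrow> preimage I \<subseteq> preimage J"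
  by (auto simp: preimage_def)

lemma shadow_finite_lesspoll: "finite A \<Longrightarrow> shadow A \<prec> K"
proof -
  assume "finite A"
  have "shadow A = (\<Union>x\<in>A. {\<xi> \<in> K. x \<in> g \<xi>})" by (auto simp: shadow_def)
  also have "\<dots> \<prec> K"
    using infinite_index \<open>finite A\<close> by (rule finite_UN_lesspoll_infinite) (rule point_preimages_small)
  finally show ?thesis .
qed

lemma value_shadow_lesspoll: "G \<in> g ` K \<Longrightarrow> shadow G \<prec> K"
  using finite_values shadow_finite_lesspoll by blast

lemma exists_value_with_large_preimage:
  assumes "shadow A \<prec> K" and "Z \<prec> K"
  shows "\<exists>G\<in>g ` K. G \<inter> A = {} \<and> Z \<prec> preimage {G}"
proof (rule ccontr)
  assume no_value: "\<not> ?thesis"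
  define R where "R = K - shadow A"
  have small_preimages: "preimage {G} \<lesssim> Z" if "G \<in> g ` R" for G
    using that no_value not_lepoll_iff_lesspoll by (auto simp: R_def shadow_def)
  have "R \<subseteq> (\<Union>G\<in>g ` R. preimage {G})" by (auto simp: R_def preimage_def)
  then have "R \<lesssim> (\<Union>G\<in>g ` R. preimage {G})" by (rule subset_imp_lepoll)
  also have "\<dots> \<lesssim> g ` R \<times> Z" using small_preimages by (rule UN_lepoll_Times)
  also have "g ` R \<times> Z \<prec> K"
  proof (rule Times_lesspoll_infinite[OF infinite_index _ assms(2)])
    show "g ` R \<prec> K"
      by (rule lesspoll_trans1[OF subset_imp_lepoll few_values]) (auto simp: R_def)
  qed
  finally have "R \<prec> K" .
  then have "shadow A \<union> R \<prec> K" using Un_lesspoll_infinite[OF infinite_index assms(1)] by blast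
  moreover have "shadow A \<union> R = K" by (auto simp: R_def shadow_def)
  ultimately show False by simp
qed

lemma absorbing_chain_Union:
  assumes C: "subset.chain {I. absorbing I} C" shows "absorbing (\<Union>C)"
proof -
  have absorbing: "absorbing I" if "I \<in> C" for I
    using C that by (auto simp: subset_chain_def)
  have "chain\<^sub>\<subseteq> C" using C by (simp add: chain_subset_def subset_chain_def)
  then have "disjoint (\<Union>C)"
    by (rule pairwise_chain_Union[rotated]) (use absorbing in \<open>simp add: absorbing_def\<close>)
  moreover have "\<Union>C \<subseteq> g ` K" using absorbing by (auto simp: absorbing_def)
  moreover have "shadow G \<lesssim> preimage (\<Union>C)" if "G \<in> \<Union>C" for G
  proof -
    obtain I where "G \<in> I" "I \<in> C" using \<open>G \<in> \<Union>C\<close> by blast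
    then have "shadow G \<lesssim> preimage I"
      using absorbing unfolding absorbing_def by blast
    also have "preimage I \<lesssim> preimage (\<Union>C)"
      using \<open>I \<in> C\<close> by (intro subset_imp_lepoll preimage_mono) blast
    finally show ?thesis .
  qed
  ultimately show ?thesis by (simp add: absorbing_def)
qed

lemma shadow_Union_lesspoll:
  assumes "absorbing M" and "preimage M \<prec> K" shows "shadow (\<Union>M) \<prec> K"
proof -
  have "shadow (\<Union>M) = (\<Union>G\<in>M. shadow G)" by (auto simp: shadow_def)
  also have "\<dots> \<lesssim> M \<times> preimage M"
    using assms(1) by (intro UN_lepoll_Times) (auto simp: absorbing_def)
  also have "M \<times> preimage M \<prec> K"
  proof (rule Times_lesspoll_infinite[OF infinite_index _ assms(2)])
    have "M \<subseteq> g ` K" using assms(1) by (simp add: absorbing_def)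
    then show "M \<prec> K" using lesspoll_trans1[OF subset_imp_lepoll few_values] by blast
  qed
  finally show ?thesis .
qed

lemma absorbing_sequence:
  assumes "shadow A \<prec> K"
  obtains G :: "nat \<Rightarrow> 'a set"
  where "\<And>n. G n \<in> g ` K" "\<And>n. G n \<inter> A = {}" "\<And>m n. m \<noteq> n \<Longrightarrow> G m \<inter> G n = {}"
    and "\<And>n. shadow (G n) \<lesssim> preimage {G (Suc n)}"
proof -
  define next_value where
    "next_value B = (SOME G. G \<in> g ` K \<and> G \<inter> B = {} \<and> shadow B \<prec> preimage {G})" for B
  have next_value: "next_value B \<in> g ` K \<and> next_value B \<inter> B = {} \<and> shadow B \<prec> preimage {next_value B}"
    if B: "shadow B \<prec> K" for B
  proof -
    obtain G where "G \<in> g ` K \<and> G \<inter> B = {} \<and> shadow B \<prec> preimage {G}"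
      using exists_value_with_large_preimage[OF B B] by auto
    then show ?thesis unfolding next_value_def by (rule someI)
  qed
  define used where "used n = ((\<lambda>B. B \<union> next_value B) ^^ n) A" for n
  have used_Suc: "used (Suc n) = used n \<union> next_value (used n)" for n
    by (simp add: used_def)
  have used_small: "shadow (used n) \<prec> K" for n
  proof (induction n)
    case 0
    then show ?case using assms by (simp add: used_def)
  next
    case (Suc n)
    have "shadow (next_value (used n)) \<prec> K"
      using next_value[OF Suc.IH] by (intro value_shadow_lesspoll) simp
    with Suc.IH show ?case
      by (simp add: used_Suc shadow_Un Un_lesspoll_infinite[OF infinite_index])
  qed
  define G where "G n = next_value (used n)" for n
  have G: "G n \<in> g ` K" "G n \<inter> used n = {}" "shadow (used n) \<prec> preimage {G n}" for n
    using next_value[OF used_small] by (simp_all add: G_def)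
  have used_mono: "used m \<subseteq> used n" if "m \<le> n" for m n
    by (rule lift_Suc_mono_le[of used, OF _ that]) (simp add: used_Suc)
  have G_used: "G m \<subseteq> used n" if "m < n" for m n
    using used_mono[of "Suc m" n] that by (auto simp: used_Suc G_def)
  show thesis
  proof
    show "G n \<in> g ` K" for n by (fact G(1))
    show "G n \<inter> A = {}" for n
      using G(2)[of n] used_mono[of 0 n] by (auto simp: used_def)
    show "G m \<inter> G n = {}" if "m \<noteq> n" for m n
    proof (cases "m < n")
      case True
      then show ?thesis using G(2)[of n] G_used[of m n] by auto
    next
      case False
      then show ?thesis using that G(2)[of m] G_used[of n m] by auto
    qed
    show "shadow (G n) \<lesssim> preimage {G (Suc n)}" for n
    proof -
      have "shadow (G n) \<subseteq> shadow (used (Suc n))" by (simp add: used_Suc shadow_Un G_def)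
      then have "shadow (G n) \<lesssim> shadow (used (Suc n))" by (rule subset_imp_lepoll)
      also have "\<dots> \<lesssim> preimage {G (Suc n)}" using G(3) by (rule lesspoll_imp_lepoll)
      finally show ?thesis .
    qed
  qed
qed

lemma absorbing_extend:
  assumes M: "absorbing M" and small: "preimage M \<prec> K"
  shows "\<exists>N. absorbing N \<and> M \<subset> N"
proof -
  obtain G where G: "\<And>n. G n \<in> g ` K" "\<And>n. G n \<inter> \<Union>M = {}" "\<And>m n. m \<noteq> n \<Longrightarrow> G m \<inter> G n = {}"
    and absorbed: "\<And>n. shadow (G n) \<lesssim> preimage {G (Suc n)}"
    by (rule absorbing_sequence[OF shadow_Union_lesspoll[OF M small]]) (rule that)
  define N where "N = M \<union> range G"
  have "disjoint N"
  proof (rule disjointI)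
    fix H H' assume "H \<in> N" "H' \<in> N" "H \<noteq> H'"
    then consider "H \<in> M" "H' \<in> M" | n where "H = G n" "H' \<in> M" | n where "H \<in> M" "H' = G n"
      | m n where "H = G m" "H' = G n" "m \<noteq> n"
      unfolding N_def by auto
    then show "H \<inter> H' = {}"
    proof cases
      case 1
      then show ?thesis using M disjointD[of M H H'] \<open>H \<noteq> H'\<close> by (simp add: absorbing_def)
    next
      case (2 n)
      then show ?thesis using G(2)[of n] by auto
    next
      case (3 n)
      then show ?thesis using G(2)[of n] by auto
    next
      case (4 m n)
      then show ?thesis using G(3) by simp
    qed
  qed
  moreover have "shadow H \<lesssim> preimage N" if H: "H \<in> N" for H
  proof (cases "H \<in> M")
    case True
    then have "shadow H \<lesssim> preimage M" using M by (simp add: absorbing_def)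
    also have "preimage M \<lesssim> preimage N" by (simp add: N_def preimage_mono subset_imp_lepoll)
    finally show ?thesis .
  next
    case False
    then obtain n where "H = G n" using H by (auto simp: N_def)
    then have "shadow H \<lesssim> preimage {G (Suc n)}" by (simp add: absorbed)
    also have "preimage {G (Suc n)} \<lesssim> preimage N" by (simp add: N_def preimage_mono subset_imp_lepoll)
    finally show ?thesis .
  qed
  moreover have "N \<subseteq> g ` K" using M G(1) by (auto simp: N_def absorbing_def)
  ultimately have "absorbing N" by (simp add: absorbing_def)
  moreover have "G 0 \<notin> M"
  proof
    assume "G 0 \<in> M"
    then have "G 0 = {}" using G(2)[of 0] by auto
    with G(1)[of 0] nonempty_values show False by auto
  qed
  then have "M \<subset> N" by (auto simp: N_def)
  ultimately show ?thesis by blast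
qed

lemma exists_disjoint_values_with_large_preimage: "\<exists>I\<subseteq>g ` K. disjoint I \<and> preimage I \<approx> K"
proof -
  obtain M where M: "absorbing M" and maximal: "\<And>N. absorbing N \<Longrightarrow> M \<subseteq> N \<Longrightarrow> N = M"
    using subset_Zorn'[of "{I. absorbing I}"] absorbing_chain_Union by auto
  have "\<not> preimage M \<prec> K"
  proof
    assume "preimage M \<prec> K"
    then obtain N where "absorbing N" "M \<subset> N" using absorbing_extend[OF M] by auto
    with maximal show False by auto
  qed
  moreover have "preimage M \<lesssim> K" by (auto simp: preimage_def intro: subset_imp_lepoll)
  ultimately have "preimage M \<approx> K" by (simp add: lepoll_iff_leqpoll)
  with M show ?thesis by (auto simp: absorbing_def)
qed

end

lemma large_subfamily_with_disjoint_traces: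
  fixes K :: "'i set" and F :: "'i \<Rightarrow> 'a set"
  assumes infinite: "infinite K"
    and finite_nonempty: "\<And>\<xi>. \<xi> \<in> K \<Longrightarrow> finite (F \<xi>) \<and> F \<xi> \<noteq> {}"
    and small_point_preimages: "\<And>x. {\<xi> \<in> K. x \<in> F \<xi>} \<prec> K"
  shows "\<exists>D B. D \<subseteq> K \<and> D \<approx> K \<and> disjoint ((\<lambda>\<xi>. F \<xi> \<inter> B) ` D) \<and> (\<forall>\<xi>\<in>D. F \<xi> \<inter> B \<noteq> {})"
proof -
  obtain D' where D': "D' \<subseteq> K" "pairwise (\<lambda>\<alpha> \<beta>. disjnt (F \<alpha>) (F \<beta>)) D'"
    and maximal: "\<And>\<xi>. \<xi> \<in> K - D' \<Longrightarrow> \<not> pairwise (\<lambda>\<alpha> \<beta>. disjnt (F \<alpha>) (F \<beta>)) (insert \<xi> D')"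
    using exists_maximal_pairwise_subset[of K "\<lambda>\<alpha> \<beta>. disjnt (F \<alpha>) (F \<beta>)"] by auto
  show ?thesis
  proof (cases "D' \<approx> K")
    case True
    have "disjoint ((\<lambda>\<xi>. F \<xi> \<inter> UNIV) ` D')"
    proof (rule pairwise_imageI)
      fix \<alpha> \<beta> assume "\<alpha> \<in> D'" "\<beta> \<in> D'" "\<alpha> \<noteq> \<beta>"
      then show "disjnt (F \<alpha> \<inter> UNIV) (F \<beta> \<inter> UNIV)" using pairwiseD[OF D'(2)] by simp
    qed
    moreover have "\<forall>\<xi>\<in>D'. F \<xi> \<inter> UNIV \<noteq> {}" using D'(1) finite_nonempty by auto
    ultimately show ?thesis using True D'(1) by (intro exI[of _ D'] exI[of _ UNIV]) simp
  next
    case False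
    then have "D' \<prec> K" using D'(1) by (simp add: lesspoll_def subset_imp_lepoll)
    define B where "B = (\<Union>\<xi>\<in>D'. F \<xi>)"
    have "B \<prec> K"
      unfolding B_def using infinite \<open>D' \<prec> K\<close>
      by (rule UN_finite_lesspoll_infinite) (use D'(1) finite_nonempty in blast)
    have meets: "F \<xi> \<inter> B \<noteq> {}" if \<xi>: "\<xi> \<in> K" for \<xi>
    proof (cases "\<xi> \<in> D'")
      case True
      then show ?thesis using finite_nonempty[OF \<xi>] by (auto simp: B_def)
    next
      case False
      then obtain \<beta> where "\<beta> \<in> D'" "\<not> disjnt (F \<xi>) (F \<beta>)"
        using maximal[of \<xi>] \<xi> D'(2) by (auto simp: pairwise_insert disjnt_sym)
      then show ?thesis by (auto simp: B_def disjnt_def)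
    qed
    have "(\<lambda>\<xi>. F \<xi> \<inter> B) ` K \<subseteq> Fpow B" using finite_nonempty by (auto simp: Fpow_def)
    then have few_traces: "(\<lambda>\<xi>. F \<xi> \<inter> B) ` K \<prec> K"
      by (rule lesspoll_trans1[OF subset_imp_lepoll Fpow_lesspoll_infinite[OF infinite \<open>B \<prec> K\<close>]])
    interpret few_finite_values K "\<lambda>\<xi>. F \<xi> \<inter> B"
    proof
      show "finite (F \<xi> \<inter> B)" if "\<xi> \<in> K" for \<xi> using finite_nonempty[OF that] by simp
      show "{\<xi> \<in> K. x \<in> F \<xi> \<inter> B} \<prec> K" for x
        by (rule lesspoll_trans1[OF subset_imp_lepoll small_point_preimages]) auto
    qed (use infinite meets few_traces in auto)
    obtain I where I: "I \<subseteq> (\<lambda>\<xi>. F \<xi> \<inter> B) ` K" "disjoint I" "preimage I \<approx> K"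
      using exists_disjoint_values_with_large_preimage by blast
    have "disjoint ((\<lambda>\<xi>. F \<xi> \<inter> B) ` preimage I)"
      by (rule pairwise_subset[OF I(2)]) (auto simp: preimage_def)
    moreover have "preimage I \<subseteq> K" by (auto simp: preimage_def)
    ultimately show ?thesis using I(3) meets by (intro exI[of _ "preimage I"] exI[of _ B]) auto
  qed
qed

theorem mainTheorem4:
  fixes K :: "'i set" and F :: "'i \<Rightarrow> 'a set"
  assumes "infinite K"
    and "\<And>\<xi>. \<xi> \<in> K \<Longrightarrow> finite (F \<xi>) \<and> F \<xi> \<noteq> {}"
    and "\<And>x. {\<xi> \<in> K. x \<in> F \<xi>} \<prec> K"
  shows "\<exists>D x. D \<subseteq> K \<and> D \<approx> K \<and> (\<forall>\<xi>\<in>D. x \<xi> \<in> F \<xi>) \<and>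
           (\<forall>\<alpha>\<in>D. \<forall>\<beta>\<in>D. x \<alpha> \<in> F \<beta> \<longrightarrow> x \<alpha> = x \<beta>)"
proof -
  obtain D B where D: "D \<subseteq> K" "D \<approx> K"
    and traces: "disjoint ((\<lambda>\<xi>. F \<xi> \<inter> B) ` D)" "\<And>\<xi>. \<xi> \<in> D \<Longrightarrow> F \<xi> \<inter> B \<noteq> {}"
    using large_subfamily_with_disjoint_traces[OF assms] by blast
  obtain x where x: "\<forall>\<xi>\<in>D. x \<xi> \<in> F \<xi>" "\<forall>\<alpha>\<in>D. \<forall>\<beta>\<in>D. x \<alpha> \<in> F \<beta> \<longrightarrow> x \<alpha> = x \<beta>"
    using consistent_choice_from_disjoint_traces[OF traces] by blast
  show ?thesis by (intro exI[of _ D] exI[of _ x] conjI D x)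
qed

end
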